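(* Let $\mathcal{M}\subset\mathbb{R}^n$ be a locally symmetric $C^2$ submanifold. If for some $\bar x\in\mathcal{M}$, $\sigma\in\Sigma^n$ and $\delta>0$ we have $\mathcal{M}\cap B(\bar x,\delta)\subseteq\Delta(\sigma)$, then $$\mathcal{M}\subseteq\Delta(\sigma)^{\perp\perp}\setminus\bigcup_{\sigma'\prec\prec\sigma}\Delta(\sigma').$$
   Context: $\Sigma^n$ permutations of $\mathbb{N}_n$ acting by $(\sigma x)_i=x_{\sigma^{-1}(i)}$; $P(\sigma)$ orbit partition; $P(x)$ partition by equal coordinates; $\Delta(\sigma)=\{x:P(x)=P(\sigma)\}$; $\Delta(\sigma)^{\perp\perp}=\{x:x_i=x_j$ whenever $i,j$ lie in the same set of $P(\sigma)\}$. $\sigma'\prec\sigma$ means $P(\sigma)$ refines $P(\sigma')$ (every set of $P(\sigma')$ is a union of sets of $P(\sigma)$) and $P(\sigma')\ne P(\sigma)$. $\sigma'\prec\prec\sigma$ ("much smaller") means $\sigma'\prec\sigma$ and some set of $P(\sigma')$ is the union of at least two sets of $P(\sigma)$, at least one of which has at least two elements. $\mathbb{R}^n_\ge=\{x:x_1\ge\cdots\ge x_n\}$; $B$ open ball. A set $S$ is locally symmetric if $S\cap\mathbb{R}^n_\ge\ne\emptyset$ and each $x\in S$ has $\delta>0$ with $\sigma(S\cap B(x,\delta))=S\cap B(x,\delta)$ for all $y\in S\cap B(x,\delta)$, all $\sigma$ with $\sigma y=y$. A locally symmetric $C^2$ submanifold is a connected $C^2$ submanifold without boundary which is locally symmetric.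 *)

theory Defs
  imports "HOL-Analysis.Analysis"
begin

text \<open>Vectors in R^n are modelled as real^'n with a finite, linearly ordered
index type 'n (the order gives the coordinate order 1 < ... < n).\<close>

definition perm_act :: "('n \<Rightarrow> 'n) \<Rightarrow> real^'n \<Rightarrow> real^'n" where
  "perm_act \<sigma> x = (\<chi> i. x $ (inv \<sigma> i))"

definition orbit_partition :: "('n \<Rightarrow> 'n) \<Rightarrow> 'n set set" where
  "orbit_partition \<sigma> = range (\<lambda>i. {j. \<exists>k::nat. (\<sigma> ^^ k) i = j})"

definition coord_partition :: "real^'n \<Rightarrow> 'n set set" where
  "coord_partition x = range (\<lambda>i. {j. x $ j = x $ i})"

definition Delta :: "('n \<Rightarrow> 'n) \<Rightarrow> (real^'n) set" where
  "Delta \<sigma> = {x. coord_partition x = orbit_partition \<sigma>}"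

definition Delta_perpperp :: "('n \<Rightarrow> 'n) \<Rightarrow> (real^'n) set" where
  "Delta_perpperp \<sigma> = {x. \<forall>B\<in>orbit_partition \<sigma>. \<forall>i\<in>B. \<forall>j\<in>B. x $ i = x $ j}"

definition refines :: "'a set set \<Rightarrow> 'a set set \<Rightarrow> bool" where
  "refines P Q \<longleftrightarrow> (\<forall>B\<in>Q. \<exists>C\<subseteq>P. B = \<Union>C)"

definition perm_prec :: "('n \<Rightarrow> 'n) \<Rightarrow> ('n \<Rightarrow> 'n) \<Rightarrow> bool" where
  "perm_prec \<sigma>' \<sigma> \<longleftrightarrow> refines (orbit_partition \<sigma>) (orbit_partition \<sigma>')
      \<and> orbit_partition \<sigma>' \<noteq> orbit_partition \<sigma>"

definition perm_much_smaller :: "('n \<Rightarrow> 'n) \<Rightarrow> ('n \<Rightarrow> 'n) \<Rightarrow> bool" where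
  "perm_much_smaller \<sigma>' \<sigma> \<longleftrightarrow> perm_prec \<sigma>' \<sigma> \<and>
     (\<exists>B\<in>orbit_partition \<sigma>'. \<exists>C\<subseteq>orbit_partition \<sigma>.
        B = \<Union>C \<and> card C \<ge> 2 \<and> (\<exists>A\<in>C. card A \<ge> 2))"

definition ordered_cone :: "(real^'n::{finite,linorder}) set" where
  "ordered_cone = {x. \<forall>i j. i \<le> j \<longrightarrow> x $ j \<le> x $ i}"

definition locally_symmetric :: "(real^'n::{finite,linorder}) set \<Rightarrow> bool" where
  "locally_symmetric S \<longleftrightarrow> S \<inter> ordered_cone \<noteq> {} \<and>
     (\<forall>x\<in>S. \<exists>\<delta>>0. \<forall>y\<in>S \<inter> ball x \<delta>. \<forall>\<sigma>. \<sigma> permutes UNIV \<and> perm_act \<sigma> y = y \<longrightarrow>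
        perm_act \<sigma> ` (S \<inter> ball x \<delta>) = S \<inter> ball x \<delta>)"

definition C2_on :: "'a::euclidean_space set \<Rightarrow> ('a \<Rightarrow> 'b::euclidean_space) \<Rightarrow> bool" where
  "C2_on U f \<longleftrightarrow> open U \<and> (\<exists>f' f''.
     (\<forall>x\<in>U. (f has_derivative blinfun_apply (f' x)) (at x)) \<and>
     (\<forall>x\<in>U. (f' has_derivative blinfun_apply (f'' x)) (at x)) \<and>
     continuous_on U f'')"

definition C2_submanifold :: "'a::euclidean_space set \<Rightarrow> bool" where
  "C2_submanifold S \<longleftrightarrow> connected S \<and>
     (\<forall>x\<in>S. \<exists>U (\<Phi>::'a \<Rightarrow> 'a) L. open U \<and> x \<in> U \<and> inj_on \<Phi> U \<and> open (\<Phi> ` U) \<and>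
        C2_on U \<Phi> \<and> C2_on (\<Phi> ` U) (the_inv_into U \<Phi>) \<and>
        subspace L \<and> \<Phi> ` (S \<inter> U) = L \<inter> \<Phi> ` U)"

definition locally_symmetric_C2_submanifold :: "(real^'n::{finite,linorder}) set \<Rightarrow> bool" where
  "locally_symmetric_C2_submanifold M \<longleftrightarrow> C2_submanifold M \<and> locally_symmetric M"

end

theory Submission
  imports Defs "HOL-Combinatorics.Orbits"
begin

(* The points of M near which M lies in the fixed space Delta_perpperp sigma of sigma form a
  relatively open subset of M, which contains xbar. It is also relatively closed: at a limit
  point p of it, the tangent vectors of M are sigma-fixed by continuity of the chart derivatives,
  so by the inverse function theorem the orbit average (the orthogonal projection onto
  Delta_perpperp sigma) is injective on M near p. Since p is fixed, local symmetry lets sigma map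
  M near p into itself, and the orbit average does not distinguish x from sigma x; hence sigma
  fixes M near p. By connectedness M lies in Delta_perpperp sigma.

  If some x in M lay in Delta sigma' with sigma' much smaller than sigma, pick i \<noteq> i' in one
  sigma-orbit and j in another sigma-orbit that sigma' merges with it, so x_i = x_j. The
  transposition (i j) fixes each point z of {z \<in> M. z_i = z_j}, hence maps M near z into
  M, where the coordinates i and i' agree; this forces z'_j = z'_i' = z'_i for z' \<in> M near z.
  So that set is open and closed in M, hence all of M, which contradicts xbar \<in> Delta sigma,
  where i and j lie in different orbits. *)

lemma permutation_if_permutes_UNIV:
  assumes "\<sigma> permutes (UNIV :: 'n::finite set)"
  shows "permutation \<sigma>"
  unfolding permutation_permutes using assms finite_UNIV by auto

lemma orbit_partition_eq_range_orbit:
  assumes "permutation \<sigma>"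
  shows "orbit_partition \<sigma> = range (orbit \<sigma>)"
  unfolding orbit_partition_def orbit_altdef_permutation[OF assms] by (simp add: eq_commute)

lemma orbit_eq_if_mem:
  assumes "permutation \<sigma>" "j \<in> orbit \<sigma> i"
  shows "orbit \<sigma> j = orbit \<sigma> i"
  using orbit_cyclic_eq3[OF cyclic_on_orbit'[OF assms(1)] assms(2)] .

lemma image_orbit_eq:
  assumes "permutation \<sigma>"
  shows "\<sigma> ` orbit \<sigma> i = orbit \<sigma> i"
  using orbit_inverse[OF permutation_self_in_orbit[OF assms], where f = \<sigma> and g' = \<sigma>]
    permutation_orbit_step[OF assms] by simp

lemma perm_act_nth [simp]: "perm_act \<sigma> x $ i = x $ inv \<sigma> i"
  by (simp add: perm_act_def)

lemma perm_act_eq_self_iff: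
  assumes "\<sigma> permutes UNIV"
  shows "perm_act \<sigma> x = x \<longleftrightarrow> (\<forall>i. x $ \<sigma> i = x $ i)"
  unfolding vec_eq_iff perm_act_nth
  by (metis permutes_inverses[OF assms])

lemma linear_perm_act: "linear (perm_act \<sigma>)"
  by (rule linearI) (auto simp: vec_eq_iff)

lemma norm_perm_act:
  assumes "\<sigma> permutes UNIV"
  shows "norm (perm_act \<sigma> x) = norm x"
proof -
  have "bij_betw (inv \<sigma>) UNIV UNIV"
    using permutes_inv[OF assms] permutes_imp_bij by blast
  then have "(\<Sum>i\<in>UNIV. (norm (x $ inv \<sigma> i))\<^sup>2) = (\<Sum>i\<in>UNIV. (norm (x $ i))\<^sup>2)"
    by (rule sum.reindex_bij_betw[of _ _ _ "\<lambda>i. (norm (x $ i))\<^sup>2"])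
  then show ?thesis
    unfolding norm_vec_def L2_set_def by simp
qed

lemma nth_eq_on_orbit:
  assumes "\<forall>i. x $ \<sigma> i = x $ i" "j \<in> orbit \<sigma> i"
  shows "x $ j = x $ i"
  using assms(2) by induction (use assms(1) in auto)

lemma Delta_perpperp_nth_eq:
  assumes "permutation \<sigma>" "x \<in> Delta_perpperp \<sigma>" "j \<in> orbit \<sigma> i"
  shows "x $ j = x $ i"
proof -
  have "orbit \<sigma> i \<in> orbit_partition \<sigma>"
    by (simp add: orbit_partition_eq_range_orbit[OF assms(1)])
  then show ?thesis
    using assms(2,3) permutation_self_in_orbit[OF assms(1), of i] unfolding Delta_perpperp_def by blast
qed

lemma Delta_perpperp_eq_fixed:
  assumes "\<sigma> permutes UNIV"
  shows "Delta_perpperp \<sigma> = {x. perm_act \<sigma> x = x}"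
proof -
  have perm: "permutation \<sigma>"
    using assms by (rule permutation_if_permutes_UNIV)
  have "x \<in> Delta_perpperp \<sigma> \<longleftrightarrow> (\<forall>i. x $ \<sigma> i = x $ i)" for x
  proof
    assume "x \<in> Delta_perpperp \<sigma>"
    then show "\<forall>i. x $ \<sigma> i = x $ i"
      using Delta_perpperp_nth_eq[OF perm _ orbit.base] by blast
  next
    assume "\<forall>i. x $ \<sigma> i = x $ i"
    then have "x $ j = x $ k" if "j \<in> orbit \<sigma> l" "k \<in> orbit \<sigma> l" for j k l
      using nth_eq_on_orbit that by metis
    then show "x \<in> Delta_perpperp \<sigma>"
      unfolding Delta_perpperp_def orbit_partition_eq_range_orbit[OF perm] by blast
  qed
  then show ?thesis
    using perm_act_eq_self_iff[OF assms] by blast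
qed

lemma closed_Delta_perpperp:
  assumes "\<sigma> permutes UNIV"
  shows "closed (Delta_perpperp \<sigma>)"
proof -
  have "continuous_on UNIV (perm_act \<sigma>)"
    using linear_perm_act[THEN linear_conv_bounded_linear[THEN iffD1]] by (rule linear_continuous_on)
  then show ?thesis
    unfolding Delta_perpperp_eq_fixed[OF assms] by (simp add: closed_Collect_eq continuous_on_id)
qed

lemma Delta_subset_Delta_perpperp: "Delta \<sigma> \<subseteq> Delta_perpperp \<sigma>"
proof
  fix x
  assume "x \<in> Delta \<sigma>"
  then have "orbit_partition \<sigma> = range (\<lambda>i. {j. x $ j = x $ i})"
    unfolding Delta_def coord_partition_def by simp
  then show "x \<in> Delta_perpperp \<sigma>"
    unfolding Delta_perpperp_def by auto
qed

lemma Delta_nth_eq_iff: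
  assumes "permutation \<sigma>" "x \<in> Delta \<sigma>"
  shows "x $ j = x $ i \<longleftrightarrow> j \<in> orbit \<sigma> i"
proof -
  have "{j. x $ j = x $ i} \<in> range (orbit \<sigma>)"
    using assms unfolding Delta_def coord_partition_def orbit_partition_eq_range_orbit[OF assms(1)]
    by (metis (mono_tags) mem_Collect_eq rangeI)
  then obtain c where c: "{j. x $ j = x $ i} = orbit \<sigma> c"
    by blast
  then have "orbit \<sigma> i = orbit \<sigma> c"
    using orbit_eq_if_mem[OF assms(1)] by blast
  then show ?thesis
    using c[unfolded set_eq_iff mem_Collect_eq] by simp
qed

definition orbit_average :: "('n::finite \<Rightarrow> 'n) \<Rightarrow> real^'n \<Rightarrow> real^'n" where
  "orbit_average \<sigma> x = (\<chi> i. (\<Sum>j\<in>orbit \<sigma> i. x $ j) / real (card (orbit \<sigma> i)))"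

lemma linear_orbit_average: "linear (orbit_average \<sigma>)"
  by (rule linearI)
    (auto simp: orbit_average_def vec_eq_iff sum.distrib sum_distrib_left add_divide_distrib)

lemma orbit_average_perm_act:
  assumes "\<sigma> permutes UNIV"
  shows "orbit_average \<sigma> (perm_act \<sigma> x) = orbit_average \<sigma> x"
proof -
  have perm: "permutation \<sigma>"
    using assms by (rule permutation_if_permutes_UNIV)
  have "(\<Sum>j\<in>orbit \<sigma> i. x $ inv \<sigma> j) = (\<Sum>j\<in>orbit \<sigma> i. x $ j)" for i
  proof -
    have "inj_on \<sigma> (orbit \<sigma> i)"
      using permutes_inj[OF assms] inj_on_subset by blast
    then have "(\<Sum>j\<in>\<sigma> ` orbit \<sigma> i. x $ inv \<sigma> j) = (\<Sum>j\<in>orbit \<sigma> i. x $ inv \<sigma> (\<sigma> j))"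
      by (simp add: sum.reindex)
    then show ?thesis
      using image_orbit_eq[OF perm] permutes_inverses(2)[OF assms] by simp
  qed
  then show ?thesis
    unfolding orbit_average_def by simp
qed

lemma orbit_average_fixed:
  assumes "\<sigma> permutes UNIV" "perm_act \<sigma> x = x"
  shows "orbit_average \<sigma> x = x"
proof -
  have perm: "permutation \<sigma>"
    using assms(1) by (rule permutation_if_permutes_UNIV)
  have "\<forall>i. x $ \<sigma> i = x $ i"
    using assms perm_act_eq_self_iff by blast
  then have "(\<Sum>j\<in>orbit \<sigma> i. x $ j) = (\<Sum>j\<in>orbit \<sigma> i. x $ i)" for i
    by (intro sum.cong) (auto dest: nth_eq_on_orbit)
  moreover have "card (orbit \<sigma> i) \<noteq> 0" for i
    using permutation_self_in_orbit[OF perm, of i] by auto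
  ultimately show ?thesis
    unfolding orbit_average_def vec_eq_iff by simp
qed

lemma C2_on_imp_C1:
  assumes "C2_on U f"
  obtains f' where "\<And>x. x \<in> U \<Longrightarrow> (f has_derivative blinfun_apply (f' x)) (at x)"
    "continuous_on U f'"
proof -
  obtain f' f'' where "\<forall>x\<in>U. (f has_derivative blinfun_apply (f' x)) (at x)"
    "\<forall>x\<in>U. (f' has_derivative blinfun_apply (f'' x)) (at x)"
    using assms unfolding C2_on_def by blast
  moreover from this(2) have "continuous_on U f'"
    using has_derivative_continuous continuous_at_imp_continuous_on by blast
  ultimately show thesis
    using that by blast
qed

lemma continuous_at_vanishing_on_closure:
  fixes h :: "'a::metric_space \<Rightarrow> 'b::real_normed_vector"
  assumes "continuous (at p) h" "p \<in> closure S" "\<And>x. x \<in> S \<Longrightarrow> h x = 0"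
  shows "h p = 0"
proof -
  obtain a where a: "\<forall>n. a n \<in> S" "a \<longlonglongrightarrow> p"
    using closure_sequential[THEN iffD1, OF assms(2)] by blast
  have "(\<lambda>n. h (a n)) \<longlonglongrightarrow> h p"
    using assms(1) a(2) by (rule isCont_tendsto_compose)
  moreover have "(\<lambda>n. h (a n)) = (\<lambda>n. 0)"
    using a(1) assms(3) by blast
  ultimately have "(\<lambda>n. 0) \<longlonglongrightarrow> h p"
    by simp
  then show ?thesis
    by (simp add: LIMSEQ_const_iff)
qed

lemma has_derivative_in_kernel:
  fixes f :: "'a::real_normed_vector \<Rightarrow> 'b::real_normed_vector"
    and K :: "'b \<Rightarrow> 'c::real_normed_vector"
  assumes f: "(f has_derivative f') (at y)" and K: "bounded_linear K"
    and L: "subspace L" "y \<in> L" "v \<in> L"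
    and vanish: "e > 0" "\<And>z. z \<in> L \<Longrightarrow> dist z y < e \<Longrightarrow> K (f z) = 0"
  shows "K (f' v) = 0"
proof -
  define h where "h t = K (f (y + t *\<^sub>R v))" for t :: real
  have "((\<lambda>t::real. y + t *\<^sub>R v) has_derivative (\<lambda>t. t *\<^sub>R v)) (at 0)"
    by (auto intro!: derivative_eq_intros)
  with f have "((f \<circ> (\<lambda>t. y + t *\<^sub>R v)) has_derivative (f' \<circ> (\<lambda>t. t *\<^sub>R v))) (at 0)"
    by (intro diff_chain_at) simp_all
  then have h': "(h has_derivative (\<lambda>t. K (f' (t *\<^sub>R v)))) (at 0)"
    unfolding h_def using bounded_linear.has_derivative[OF K] by (simp add: o_def)
  define r where "r = e / (norm v + 1)"
  have "r > 0"
    using vanish(1) by (simp add: r_def add_nonneg_pos)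
  have h_zero: "h t = 0" if "t \<in> ball 0 r" for t
  proof -
    have "\<bar>t\<bar> * norm v \<le> \<bar>t\<bar> * (norm v + 1)"
      by (simp add: mult_left_mono)
    also have "\<dots> < e"
      using that by (simp add: r_def pos_less_divide_eq add_nonneg_pos)
    finally have "\<bar>t\<bar> * norm v < e" .
    then show ?thesis
      unfolding h_def using L by (intro vanish(2)) (simp_all add: dist_norm subspace_add subspace_scale)
  qed
  have "((\<lambda>t. 0) has_derivative (\<lambda>t. 0)) (at (0::real))"
    by simp
  then have "(h has_derivative (\<lambda>t. 0)) (at 0)"
    by (rule has_derivative_transform_within_open[OF _ open_ball[of 0 r]]) (use \<open>r > 0\<close> h_zero in auto)
  with h' have "(\<lambda>t. K (f' (t *\<^sub>R v))) = (\<lambda>t. 0)"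
    by (rule has_derivative_unique)
  then show ?thesis
    by (metis scaleR_one)
qed

lemma inj_on_near_point_if_identity_on_tangent:
  fixes \<Phi> P :: "'a::euclidean_space \<Rightarrow> 'a" and \<iota>' :: "'a \<Rightarrow> 'a \<Rightarrow>\<^sub>L 'a"
  assumes U: "open U" "p \<in> U" "inj_on \<Phi> U" "open (\<Phi> ` U)"
    and \<Phi>': "(\<Phi> has_derivative \<Phi>') (at p)"
    and \<iota>': "\<And>y. y \<in> \<Phi> ` U \<Longrightarrow> (the_inv_into U \<Phi> has_derivative \<iota>' y) (at y)"
      "continuous_on (\<Phi> ` U) \<iota>'"
    and L: "\<Phi> ` (M \<inter> U) \<subseteq> L"
    and P: "linear P" "\<And>v. v \<in> L \<Longrightarrow> P (\<iota>' (\<Phi> p) v) = \<iota>' (\<Phi> p) v"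
  shows "\<exists>e>0. inj_on P (M \<inter> ball p e)"
proof -
  define W \<iota> q where "W = \<Phi> ` U" and "\<iota> = the_inv_into U \<Phi>" and "q = \<Phi> p"
  have \<iota>_\<Phi>: "\<iota> (\<Phi> x) = x" if "x \<in> U" for x
    unfolding \<iota>_def using U(3) that by (rule the_inv_into_f_f)
  have \<Phi>_\<iota>: "\<Phi> (\<iota> y) = y" if "y \<in> W" for y
    unfolding \<iota>_def using U(3) that unfolding W_def by (rule f_the_inv_into_f)
  have "q \<in> W" "open W"
    using U unfolding q_def W_def by auto
  have \<Phi>'_\<iota>': "\<Phi>' (\<iota>' q v) = v" for v
  proof -
    have "((\<Phi> \<circ> \<iota>) has_derivative (\<Phi>' \<circ> \<iota>' q)) (at q)"
      using \<iota>'(1)[of q] \<Phi>' \<iota>_\<Phi>[OF U(2)] \<open>q \<in> W\<close>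
      unfolding \<iota>_def W_def q_def by (auto intro: diff_chain_at)
    moreover have "((\<Phi> \<circ> \<iota>) has_derivative (\<lambda>v. v)) (at q)"
      by (rule has_derivative_transform_within_open[OF has_derivative_ident \<open>open W\<close> \<open>q \<in> W\<close>])
        (simp add: \<Phi>_\<iota>)
    ultimately have "\<Phi>' \<circ> \<iota>' q = (\<lambda>v. v)"
      by (rule has_derivative_unique)
    then show ?thesis
      by (metis comp_apply)
  qed
  have "bounded_linear (\<lambda>x. \<Phi>' (P x))"
    using bounded_linear_compose[OF has_derivative_bounded_linear[OF \<Phi>']] P(1)
    by (simp add: linear_conv_bounded_linear)
  then obtain B :: "'a \<Rightarrow>\<^sub>L 'a" where B: "\<And>x. B x = \<Phi>' (P x)"
    by (metis bounded_linear_Blinfun_apply)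
  \<comment> \<open>\<open>F \<circ> \<Phi> = B\<close> on \<open>M\<close> near \<open>p\<close>, while the derivative of \<open>F\<close> at \<open>q\<close> is the identity.\<close>
  define F where "F y = B (\<iota> y) + (y - B (\<iota>' q y))" for y
  define F' where "F' y = (B o\<^sub>L (\<iota>' y - \<iota>' q)) + id_blinfun" for y
  have F_deriv: "(F has_derivative F' y) (at y)" if "y \<in> W" for y
  proof -
    have "((\<lambda>y. B (\<iota> y)) has_derivative (\<lambda>w. B (\<iota>' y w))) (at y)"
      using blinfun.bounded_linear_right \<iota>'(1)[OF that[unfolded W_def]] unfolding \<iota>_def
      by (rule bounded_linear.has_derivative)
    moreover have "((\<lambda>y. y - B (\<iota>' q y)) has_derivative (\<lambda>w. w - B (\<iota>' q w))) (at y)"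
      by (intro has_derivative_diff has_derivative_ident bounded_linear_imp_has_derivative
          bounded_linear_compose[OF blinfun.bounded_linear_right blinfun.bounded_linear_right])
    ultimately have "(F has_derivative (\<lambda>w. B (\<iota>' y w) + (w - B (\<iota>' q w)))) (at y)"
      unfolding F_def by (rule has_derivative_add)
    then show ?thesis
      by (rule has_derivative_eq_rhs)
        (simp add: F'_def fun_eq_iff blinfun.add_left blinfun.diff_left blinfun.diff_right)
  qed
  have F'_cont: "continuous_on W F'"
    unfolding F'_def W_def using \<iota>'(2) by (intro continuous_intros) auto
  have F'_q: "id_blinfun o\<^sub>L F' q = id_blinfun"
    by (rule blinfun_eqI) (simp add: F'_def)
  obtain U' V G where "open U'" "q \<in> U'" and hom: "homeomorphism U' V F G"
    by (rule inverse_function_theorem[OF \<open>open W\<close> F_deriv F'_cont \<open>q \<in> W\<close> F'_q]) blast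
  have inj_F: "inj_on F U'"
    by (rule inj_on_inverseI[where g = G]) (rule homeomorphism_apply1[OF hom])
  have F_\<Phi>: "F (\<Phi> x) = B x" if "x \<in> M" "x \<in> U" for x
  proof -
    have "\<Phi> x \<in> L"
      using L that by blast
    then have "B (\<iota>' q (\<Phi> x)) = \<Phi> x"
      using B P(2) \<Phi>'_\<iota>' unfolding q_def by simp
    then show ?thesis
      unfolding F_def using \<iota>_\<Phi>[OF that(2)] by simp
  qed
  obtain r where "r > 0" "ball q r \<subseteq> U'"
    using \<open>open U'\<close> \<open>q \<in> U'\<close> open_contains_ball by blast
  moreover obtain d where "d > 0" "\<And>x. dist x p < d \<Longrightarrow> dist (\<Phi> x) q < r"
    using has_derivative_continuous[OF \<Phi>'] \<open>r > 0\<close> unfolding continuous_at_eps_delta q_def by blast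
  moreover obtain s where "s > 0" "ball p s \<subseteq> U"
    using U(1,2) open_contains_ball by blast
  ultimately have near: "x \<in> U" "\<Phi> x \<in> U'" if "x \<in> ball p (min d s)" for x
    using that by (auto simp: dist_commute subset_iff)
  have "inj_on P (M \<inter> ball p (min d s))"
  proof (rule inj_onI)
    fix x x' assume x: "x \<in> M \<inter> ball p (min d s)" and x': "x' \<in> M \<inter> ball p (min d s)"
      and "P x = P x'"
    then have "F (\<Phi> x) = F (\<Phi> x')"
      using F_\<Phi> near B by simp
    then have "\<Phi> x = \<Phi> x'"
      using inj_F near x x' by (meson IntD2 inj_onD)
    then show "x = x'"
      using U(3) near x x' by (meson IntD2 inj_onD)
  qed
  then show ?thesis
    using \<open>d > 0\<close> \<open>s > 0\<close> by (intro exI[of _ "min d s"]) simp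
qed

lemma C2_submanifoldE:
  fixes S :: "'a::euclidean_space set"
  assumes "C2_submanifold S" "x \<in> S"
  obtains U L and \<Phi> :: "'a \<Rightarrow> 'a" where "open U" "x \<in> U" "inj_on \<Phi> U" "open (\<Phi> ` U)" "C2_on U \<Phi>"
    "C2_on (\<Phi> ` U) (the_inv_into U \<Phi>)" "subspace L" "\<Phi> ` (S \<inter> U) = L \<inter> \<Phi> ` U"
  using assms unfolding C2_submanifold_def by metis

lemma tangent_in_kernel_if_locally_in_kernel:
  fixes \<Phi> :: "'a::euclidean_space \<Rightarrow> 'a" and K :: "'a \<Rightarrow> 'b::real_normed_vector"
  assumes chart: "open U" "inj_on \<Phi> U" "open (\<Phi> ` U)" "subspace L" "\<Phi> ` (M \<inter> U) = L \<inter> \<Phi> ` U"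
    and \<iota>': "(the_inv_into U \<Phi> has_derivative \<iota>') (at (\<Phi> a))"
    and a: "a \<in> M" "a \<in> U"
    and K: "bounded_linear K" "e > 0" "\<And>x. x \<in> M \<inter> ball a e \<Longrightarrow> K x = 0"
    and "v \<in> L"
  shows "K (\<iota>' v) = 0"
proof -
  define \<iota> where "\<iota> = the_inv_into U \<Phi>"
  have "\<iota> (\<Phi> a) = a"
    unfolding \<iota>_def using chart(2) a(2) by (rule the_inv_into_f_f)
  obtain d1 where "d1 > 0" "ball (\<Phi> a) d1 \<subseteq> \<Phi> ` U"
    using chart(3) a(2) open_contains_ball by blast
  obtain d2 where "d2 > 0" "\<And>z. dist z (\<Phi> a) < d2 \<Longrightarrow> dist (\<iota> z) a < e"
    using has_derivative_continuous[OF \<iota>'] K(2) \<open>\<iota> (\<Phi> a) = a\<close>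
    unfolding continuous_at_eps_delta \<iota>_def by metis
  have "K (\<iota> z) = 0" if "z \<in> L" "dist z (\<Phi> a) < min d1 d2" for z
  proof -
    have "z \<in> \<Phi> ` (M \<inter> U)"
      using that \<open>ball (\<Phi> a) d1 \<subseteq> \<Phi> ` U\<close> chart(5) by (auto simp: dist_commute subset_iff)
    then have "\<iota> z \<in> M"
      unfolding \<iota>_def using chart(2) the_inv_into_f_f by fastforce
    moreover have "dist (\<iota> z) a < e"
      using that \<open>\<And>z. dist z (\<Phi> a) < d2 \<Longrightarrow> dist (\<iota> z) a < e\<close> by simp
    ultimately show ?thesis
      using K(3) by (simp add: dist_commute)
  qed
  moreover have "\<Phi> a \<in> L"
    using chart(5) a by blast
  ultimately show ?thesis
    using has_derivative_in_kernel[OF \<iota>' K(1) chart(4) \<open>\<Phi> a \<in> L\<close> \<open>v \<in> L\<close>] \<open>d1 > 0\<close> \<open>d2 > 0\<close>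
    unfolding \<iota>_def by (metis min_less_iff_conj)
qed

lemma dist_perm_act:
  assumes "\<sigma> permutes UNIV"
  shows "dist (perm_act \<sigma> x) (perm_act \<sigma> y) = dist x y"
  unfolding dist_norm linear_diff[OF linear_perm_act, symmetric] norm_perm_act[OF assms] ..

lemma locally_symmetricD:
  assumes "locally_symmetric M" "p \<in> M"
  obtains \<delta> where "\<delta> > 0"
    "\<And>\<tau>. \<tau> permutes UNIV \<Longrightarrow> perm_act \<tau> p = p \<Longrightarrow> perm_act \<tau> ` (M \<inter> ball p \<delta>) = M \<inter> ball p \<delta>"
proof -
  obtain \<delta> where "\<delta> > 0" and sym: "\<forall>y\<in>M \<inter> ball p \<delta>. \<forall>\<tau>. \<tau> permutes UNIV \<and> perm_act \<tau> y = y \<longrightarrow>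
      perm_act \<tau> ` (M \<inter> ball p \<delta>) = M \<inter> ball p \<delta>"
    using assms unfolding locally_symmetric_def by blast
  moreover have "p \<in> M \<inter> ball p \<delta>"
    using assms(2) \<open>\<delta> > 0\<close> by simp
  ultimately show thesis
    using that by blast
qed

lemma locally_fixed_if_orbit_average_inj:
  assumes "locally_symmetric M" "\<sigma> permutes UNIV" "p \<in> M" "perm_act \<sigma> p = p"
    and "e > 0" "inj_on (orbit_average \<sigma>) (M \<inter> ball p e)"
  shows "\<exists>e>0. M \<inter> ball p e \<subseteq> Delta_perpperp \<sigma>"
proof -
  obtain \<delta> where "\<delta> > 0" and sym: "perm_act \<sigma> ` (M \<inter> ball p \<delta>) = M \<inter> ball p \<delta>"
    using locally_symmetricD[OF assms(1,3)] assms(2,4) by metis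
  have "perm_act \<sigma> x = x" if x: "x \<in> M \<inter> ball p (min e \<delta>)" for x
  proof -
    have "dist p (perm_act \<sigma> x) = dist p x"
      using dist_perm_act[OF assms(2), of p x] assms(4) by simp
    then have "perm_act \<sigma> x \<in> M \<inter> ball p e"
      using sym x by auto
    then show ?thesis
      using inj_onD[OF assms(6) orbit_average_perm_act[OF assms(2)]] x by simp
  qed
  then show ?thesis
    using \<open>e > 0\<close> \<open>\<delta> > 0\<close> Delta_perpperp_eq_fixed[OF assms(2)]
    by (intro exI[of _ "min e \<delta>"]) auto
qed

lemma locally_fixed_at_limit_point:
  fixes M :: "(real^'n::{finite,linorder}) set"
  assumes M: "C2_submanifold M" "locally_symmetric M" and \<sigma>: "\<sigma> permutes UNIV" and "p \<in> M"
    and limit: "p \<in> closure {a \<in> M. \<exists>e>0. M \<inter> ball a e \<subseteq> Delta_perpperp \<sigma>}"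
  shows "\<exists>e>0. M \<inter> ball p e \<subseteq> Delta_perpperp \<sigma>"
proof -
  define A where "A = {a \<in> M. \<exists>e>0. M \<inter> ball a e \<subseteq> Delta_perpperp \<sigma>}"
  define K where "K x = perm_act \<sigma> x - x" for x
  have K: "bounded_linear K"
    unfolding K_def using linear_compose_sub[OF linear_perm_act linear_id]
    by (simp add: linear_conv_bounded_linear id_def)
  have fixed_iff: "x \<in> Delta_perpperp \<sigma> \<longleftrightarrow> K x = 0" for x
    using Delta_perpperp_eq_fixed[OF \<sigma>] by (simp add: K_def)
  obtain U L and \<Phi> :: "(real, 'n) vec \<Rightarrow> (real, 'n) vec"
    where chart: "open U" "p \<in> U" "inj_on \<Phi> U" "open (\<Phi> ` U)" "C2_on U \<Phi>"
      "C2_on (\<Phi> ` U) (the_inv_into U \<Phi>)" "subspace L" "\<Phi> ` (M \<inter> U) = L \<inter> \<Phi> ` U"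
    using M(1) \<open>p \<in> M\<close> by (rule C2_submanifoldE)
  obtain \<Phi>' where \<Phi>': "\<And>x. x \<in> U \<Longrightarrow> (\<Phi> has_derivative blinfun_apply (\<Phi>' x)) (at x)"
    using C2_on_imp_C1[OF chart(5)] by metis
  obtain \<iota>' where \<iota>': "\<And>y. y \<in> \<Phi> ` U \<Longrightarrow> (the_inv_into U \<Phi> has_derivative blinfun_apply (\<iota>' y)) (at y)"
      "continuous_on (\<Phi> ` U) \<iota>'"
    using C2_on_imp_C1[OF chart(6)] by metis
  have tangent_fixed: "orbit_average \<sigma> (\<iota>' (\<Phi> p) v) = \<iota>' (\<Phi> p) v" if "v \<in> L" for v
  proof -
    have vanish: "K (\<iota>' (\<Phi> a) v) = 0" if "a \<in> U \<inter> A" for a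
      using that \<open>v \<in> L\<close> unfolding A_def
      by (auto simp: subset_iff fixed_iff
          intro!: tangent_in_kernel_if_locally_in_kernel[OF chart(1,3,4,7,8) \<iota>'(1) _ _ K])
    have cont: "continuous (at p) (\<lambda>a. K (\<iota>' (\<Phi> a) v))"
    proof -
      have "continuous (at (\<Phi> p)) \<iota>'"
        using \<iota>'(2) chart(2,4) continuous_on_eq_continuous_at by blast
      then have "continuous (at p) (\<lambda>a. \<iota>' (\<Phi> a))"
        using continuous_at_compose[OF has_derivative_continuous[OF \<Phi>'[OF chart(2)]]]
        by (simp add: o_def)
      then show ?thesis
        by (intro bounded_linear.continuous[OF K] blinfun.continuous continuous_const)
    qed
    have "p \<in> closure (U \<inter> A)"
      using open_Int_closure_subset[OF chart(1), of A] chart(2) limit[folded A_def]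
      by (meson IntI subsetD)
    then have "K (\<iota>' (\<Phi> p) v) = 0"
      by (rule continuous_at_vanishing_on_closure[OF cont _ vanish])
    then show ?thesis
      using orbit_average_fixed[OF \<sigma>] by (simp add: K_def)
  qed
  have "\<Phi> ` (M \<inter> U) \<subseteq> L"
    using chart(8) by blast
  then obtain e where "e > 0" and inj: "inj_on (orbit_average \<sigma>) (M \<inter> ball p e)"
    using inj_on_near_point_if_identity_on_tangent[OF chart(1-4) \<Phi>'[OF chart(2)] \<iota>'
        _ linear_orbit_average tangent_fixed] by blast
  moreover have "perm_act \<sigma> p = p"
  proof -
    have "A \<subseteq> Delta_perpperp \<sigma>"
      unfolding A_def by (auto simp: subset_iff)
    then have "p \<in> Delta_perpperp \<sigma>"
      using limit closure_minimal[OF _ closed_Delta_perpperp[OF \<sigma>]] unfolding A_def by blast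
    then show ?thesis
      using Delta_perpperp_eq_fixed[OF \<sigma>] by blast
  qed
  ultimately show ?thesis
    using locally_fixed_if_orbit_average_inj[OF M(2) \<sigma> \<open>p \<in> M\<close>] by blast
qed

lemma connected_subset_if_locally_subset_at_limits:
  fixes M V :: "'a::metric_space set"
  assumes "connected M" "x \<in> M" "e > 0" "M \<inter> ball x e \<subseteq> V"
    and limits: "\<And>p. p \<in> M \<Longrightarrow> p \<in> closure {a \<in> M. \<exists>e>0. M \<inter> ball a e \<subseteq> V} \<Longrightarrow>
      \<exists>e>0. M \<inter> ball p e \<subseteq> V"
  shows "M \<subseteq> V"
proof -
  define A where "A = {a \<in> M. \<exists>e>0. M \<inter> ball a e \<subseteq> V}"
  have "openin (top_of_set M) A"
    unfolding openin_contains_ball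
  proof (intro conjI ballI)
    fix a assume "a \<in> A"
    then obtain e where "e > 0" "M \<inter> ball a e \<subseteq> V"
      unfolding A_def by blast
    moreover have "ball y (e - dist a y) \<subseteq> ball a e" for y
      unfolding subset_iff mem_ball using dist_triangle[of a _ y] by (smt (verit))
    ultimately have "y \<in> A" if "y \<in> ball a e \<inter> M" for y
      using that unfolding A_def by (intro CollectI conjI exI[of _ "e - dist a y"]) auto
    then show "\<exists>e>0. ball a e \<inter> M \<subseteq> A"
      using \<open>e > 0\<close> by blast
  qed (auto simp: A_def)
  moreover have "closedin (top_of_set M) A"
    unfolding closedin_closed
  proof (intro exI conjI)
    have "p \<in> A" if "p \<in> M" "p \<in> closure A" for p
      using limits[OF that[unfolded A_def]] that(1) unfolding A_def by blast
    moreover have "A \<subseteq> M"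
      unfolding A_def by blast
    ultimately show "A = M \<inter> closure A"
      using closure_subset[of A] by blast
  qed simp
  moreover have "x \<in> A"
    unfolding A_def using assms(2-4) by blast
  ultimately have "A = M"
    using \<open>connected M\<close> unfolding connected_clopen by blast
  then show ?thesis
    unfolding A_def using centre_in_ball by blast
qed

lemma locally_symmetric_coord_eq_propagates:
  fixes M :: "(real^'n::{finite,linorder}) set"
  assumes sym: "locally_symmetric M" and "connected M"
    and coupled: "\<And>z. z \<in> M \<Longrightarrow> z $ i = z $ i'" and "i' \<noteq> i" "i' \<noteq> j"
    and "x \<in> M" "x $ i = x $ j" "y \<in> M"
  shows "y $ i = y $ j"
proof (rule connected_induction_simple[OF \<open>connected M\<close> \<open>x \<in> M\<close> \<open>y \<in> M\<close>,
      where P = "\<lambda>z. z $ i = z $ j"])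
  show "x $ i = x $ j"
    by fact
  fix a assume "a \<in> M"
  show "\<exists>T. openin (top_of_set M) T \<and> a \<in> T \<and> (\<forall>x\<in>T. \<forall>y\<in>T. x $ i = x $ j \<longrightarrow> y $ i = y $ j)"
  proof (cases "a $ i = a $ j")
    case True
    have \<tau>: "Transposition.transpose i j permutes UNIV"
      by (rule permutes_swap_id) auto
    moreover have "perm_act (Transposition.transpose i j) a = a"
      unfolding perm_act_eq_self_iff[OF \<tau>]
    proof
      fix k
      show "a $ Transposition.transpose i j k = a $ k"
        using True by (cases "k = i"; cases "k = j") simp_all
    qed
    ultimately obtain \<delta> where "\<delta> > 0"
      and sym_a: "perm_act (Transposition.transpose i j) ` (M \<inter> ball a \<delta>) = M \<inter> ball a \<delta>"
      using locally_symmetricD[OF sym \<open>a \<in> M\<close>] by metis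
    have "z $ i = z $ j" if "z \<in> M \<inter> ball a \<delta>" for z
    proof -
      have "perm_act (Transposition.transpose i j) z \<in> M"
        using sym_a that by blast
      then have "z $ j = z $ i'"
        using coupled \<open>i' \<noteq> i\<close> \<open>i' \<noteq> j\<close> by fastforce
      then show ?thesis
        using coupled that by simp
    qed
    then show ?thesis
      using \<open>a \<in> M\<close> \<open>\<delta> > 0\<close> by (intro exI[of _ "M \<inter> ball a \<delta>"]) auto
  next
    case False
    have "open {z :: (real, 'n) vec. z $ i \<noteq> z $ j}"
      by (intro open_Collect_neq continuous_intros)
    then show ?thesis
      using \<open>a \<in> M\<close> False by (intro exI[of _ "M \<inter> {z. z $ i \<noteq> z $ j}"]) auto
  qed
qed

lemma perm_much_smallerE:
  fixes \<sigma> \<sigma>' :: "'n::finite \<Rightarrow> 'n"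
  assumes "\<sigma> permutes UNIV" "perm_much_smaller \<sigma>' \<sigma>"
  obtains i i' j B where "B \<in> orbit_partition \<sigma>'" "i \<in> B" "j \<in> B"
    "i' \<in> orbit \<sigma> i" "i' \<noteq> i" "j \<notin> orbit \<sigma> i"
proof -
  have perm: "permutation \<sigma>"
    using assms(1) by (rule permutation_if_permutes_UNIV)
  obtain B C A where B: "B \<in> orbit_partition \<sigma>'" "C \<subseteq> orbit_partition \<sigma>" "B = \<Union>C"
      "2 \<le> card C" "A \<in> C" "2 \<le> card A"
    using assms(2) unfolding perm_much_smaller_def by blast
  obtain i where i: "A = orbit \<sigma> i"
    using B(2,5) orbit_partition_eq_range_orbit[OF perm] by blast
  have two_elements: "X - {x} \<noteq> {}" if "2 \<le> card X" for X and x :: 'b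
  proof
    assume "X - {x} = {}"
    then have "card X \<le> card {x}"
      by (intro card_mono) auto
    then show False
      using that by simp
  qed
  obtain A' where "A' \<in> C" "A' \<noteq> A"
    using two_elements[OF B(4), of A] by blast
  then obtain j where j: "A' = orbit \<sigma> j"
    using B(2) orbit_partition_eq_range_orbit[OF perm] by blast
  have "j \<notin> orbit \<sigma> i"
    using orbit_eq_if_mem[OF perm] \<open>A' \<noteq> A\<close> i j by blast
  obtain i' where "i' \<in> orbit \<sigma> i" "i' \<noteq> i"
    using two_elements[OF B(6), of i] i by blast
  have "i \<in> B"
    using B(3,5) i permutation_self_in_orbit[OF perm, of i] by blast
  have "j \<in> B"
    using B(3) \<open>A' \<in> C\<close> j permutation_self_in_orbit[OF perm, of j] by blast
  show thesis
    by (rule that) fact+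
qed

lemma Delta_much_smaller_disjoint:
  fixes M :: "(real^'n::{finite,linorder}) set"
  assumes sym: "locally_symmetric M" and "connected M" and \<sigma>: "\<sigma> permutes UNIV"
    and M_fixed: "M \<subseteq> Delta_perpperp \<sigma>" and "xbar \<in> M" "xbar \<in> Delta \<sigma>"
    and "x \<in> M" "perm_much_smaller \<sigma>' \<sigma>"
  shows "x \<notin> Delta \<sigma>'"
proof
  assume "x \<in> Delta \<sigma>'"
  have perm: "permutation \<sigma>"
    using \<sigma> by (rule permutation_if_permutes_UNIV)
  obtain i i' j B where B: "B \<in> orbit_partition \<sigma>'" "i \<in> B" "j \<in> B"
    and i': "i' \<in> orbit \<sigma> i" "i' \<noteq> i" and j: "j \<notin> orbit \<sigma> i"
    using perm_much_smallerE[OF \<sigma> \<open>perm_much_smaller \<sigma>' \<sigma>\<close>] .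
  have "x $ i = x $ j"
    using \<open>x \<in> Delta \<sigma>'\<close> Delta_subset_Delta_perpperp B unfolding Delta_perpperp_def by blast
  moreover have "z $ i = z $ i'" if "z \<in> M" for z
    using Delta_perpperp_nth_eq[OF perm _ i'(1)] M_fixed that by (metis subsetD)
  moreover have "i' \<noteq> j"
    using i'(1) j by blast
  ultimately have "xbar $ j = xbar $ i"
    using locally_symmetric_coord_eq_propagates[OF sym \<open>connected M\<close> _ i'(2) _ \<open>x \<in> M\<close> _ \<open>xbar \<in> M\<close>]
    by metis
  then show False
    using Delta_nth_eq_iff[OF perm \<open>xbar \<in> Delta \<sigma>\<close>] j by blast
qed

theorem corollary3p21:
  fixes M :: "(real^'n::{finite,linorder}) set"
    and xbar :: "real^'n::{finite,linorder}" and \<sigma> :: "'n::{finite,linorder} \<Rightarrow> 'n" and \<delta> :: real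
  assumes "locally_symmetric_C2_submanifold M"
    and "xbar \<in> M" and "\<sigma> permutes UNIV" and "\<delta> > 0"
    and "M \<inter> ball xbar \<delta> \<subseteq> Delta \<sigma>"
  shows "M \<subseteq> Delta_perpperp \<sigma> -
           (\<Union>{Delta \<sigma>' | \<sigma>'. \<sigma>' permutes UNIV \<and> perm_much_smaller \<sigma>' \<sigma>})"
proof -
  have C2: "C2_submanifold M" and sym: "locally_symmetric M" and "connected M"
    using assms(1) unfolding locally_symmetric_C2_submanifold_def C2_submanifold_def by auto
  have M_fixed: "M \<subseteq> Delta_perpperp \<sigma>"
  proof (rule connected_subset_if_locally_subset_at_limits[OF \<open>connected M\<close> assms(2,4)])
    show "M \<inter> ball xbar \<delta> \<subseteq> Delta_perpperp \<sigma>"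
      using assms(5) Delta_subset_Delta_perpperp by blast
  qed (rule locally_fixed_at_limit_point[OF C2 sym assms(3)])
  moreover have "xbar \<in> Delta \<sigma>"
    using assms(2,4,5) by auto
  ultimately show ?thesis
    using Delta_much_smaller_disjoint[OF sym \<open>connected M\<close> assms(3) M_fixed assms(2)] by auto
qed

end
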